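(* Let $(\mathcal{P},\Sigma)$ be a measurable space, let $\mathbb{P}^+,\mathbb{P}^-$ be mutually singular probability measures on it, let $\beta\in(0,1)$ and $\mathbb{P}_m=\beta\mathbb{P}^++(1-\beta)\mathbb{P}^-$, and fix $a>0$, $\gamma\in(0,1]$. For a measurable $D:\mathcal{P}\to[0,+\infty)$ and a probability measure $\mathbb{Q}$ on $\mathcal{P}$ (the generated patch-feature distribution $\mathbb{P}_g^{(h,w)}$), define $$L_D(D,\mathbb{Q})=\gamma\,\mathbb{E}_{p\sim\mathbb{Q}}\max(0,a-D(p))+(1-\gamma)\,\mathbb{E}_{p\sim\mathbb{P}_m}\max(0,a-D(p))+\mathbb{E}_{p\sim\mathbb{P}^+}D(p),$$ $$L_G(D,\mathbb{Q})=\gamma\,\mathbb{E}_{p\sim\mathbb{Q}}D(p)+(1-\gamma)\,\mathbb{E}_{p\sim\mathbb{P}_m}D(p)-\mathbb{E}_{p\sim\mathbb{P}^+}D(p).$$ Then there is a Nash equilibrium $(D^*,\mathbb{Q}^* )$ with $\mathbb{Q}^*=\mathbb{P}^+$: there exists a measurable $D^*:\mathcal{P}\to[0,a]$ such that (i) $L_D(D^*,\mathbb{P}^+)\le L_D(D,\mathbb{P}^+)$ for every measurable $D:\mathcal{P}\to[0,+\infty)$, and (ii) $L_G(D^*,\mathbb{P}^+)\le L_G(D^*,\mathbb{Q})$ for every probability measure $\mathbb{Q}$ on $\mathcal{P}$.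
   Context: $\mathbb{P}^+$ and $\mathbb{P}^-$ model the distributions of normal and anomalous patch features; $\mathbb{P}_m$ is the (known) distribution of patch features from anomalous images, which mixes normal and anomalous patches with unknown ratio $\beta$. The generator at a fixed patch position is identified with its output distribution $\mathbb{Q}$, which may be any probability measure on $\mathcal{P}$. "Mutually singular" means there is a measurable set $S$ with $\mathbb{P}^+(S)=1$ and $\mathbb{P}^-(S)=0$. The discriminator minimizes $L_D$ and the generator minimizes $L_G$. *)

theory Defs
  imports "HOL-Probability.Probability"
begin

text \<open>Discriminator loss. All integrands are nonnegative, so expectations are
  nonnegative Lebesgue integrals (possibly infinite), valued in ennreal.\<close>
definition L_D :: "real \<Rightarrow> real \<Rightarrow> 'a measure \<Rightarrow> 'a measure \<Rightarrow> ('a \<Rightarrow> real) \<Rightarrow> 'a measure \<Rightarrow> ennreal" where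
  "L_D a \<gamma> Pm Pp D Q =
     ennreal \<gamma> * (\<integral>\<^sup>+ p. ennreal (max 0 (a - D p)) \<partial>Q)
   + ennreal (1 - \<gamma>) * (\<integral>\<^sup>+ p. ennreal (max 0 (a - D p)) \<partial>Pm)
   + (\<integral>\<^sup>+ p. ennreal (D p) \<partial>Pp)"

text \<open>Generator loss (real-valued Lebesgue integrals; it is only evaluated at a
  bounded measurable discriminator, where all expectations are finite).\<close>
definition L_G :: "real \<Rightarrow> 'a measure \<Rightarrow> 'a measure \<Rightarrow> ('a \<Rightarrow> real) \<Rightarrow> 'a measure \<Rightarrow> real" where
  "L_G \<gamma> Pm Pp D Q =
     \<gamma> * (\<integral> p. D p \<partial>Q) + (1 - \<gamma>) * (\<integral> p. D p \<partial>Pm) - (\<integral> p. D p \<partial>Pp)"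

end

theory Submission
  imports Defs
begin

text \<open>Take a set \<open>S\<close> carrying \<open>\<P>\<^sup>+\<close> and null for \<open>\<P>\<^sup>-\<close>, and let \<open>D\<^sup>* = a \<cdot> 1\<^bsub>S\<^sup>c\<^esub>\<close>.
  With \<open>c = \<gamma> + (1 - \<gamma>)\<beta> \<le> 1\<close>, the mixture satisfies \<open>\<P>\<^sub>m \<ge> \<beta>\<P>\<^sup>+\<close>, so every
  discriminator has \<open>L\<^sub>D \<ge> \<integral> c \<cdot> max 0 (a - D) + D d\<P>\<^sup>+ \<ge> c a\<close>, and \<open>D\<^sup>*\<close>
  attains \<open>c a\<close>. Since \<open>D\<^sup>*\<close> vanishes \<open>\<P>\<^sup>+\<close>-almost everywhere and is nonnegative,
  the generator cannot lower \<open>L\<^sub>G\<close> below its value at \<open>\<P>\<^sup>+\<close>.\<close>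

lemma hinge_plus_ge:
  fixes a c d :: real
  assumes "0 \<le> c" "c \<le> 1" "0 \<le> a" "0 \<le> d"
  shows "c * a \<le> c * max 0 (a - d) + d"
proof (cases "d \<le> a")
  case True
  have "0 \<le> (1 - c) * d" using assms by simp
  then show ?thesis using True by (simp add: max_def algebra_simps)
next
  case False
  have "c * a \<le> a" using assms by (simp add: mult_left_le_one_le)
  then show ?thesis using False by (simp add: max_def)
qed

lemma nn_integral_scaled_mono_measure:
  assumes sets_eq: "sets N = sets M"
    and dom: "\<And>A. A \<in> sets M \<Longrightarrow> c * emeasure M A \<le> emeasure N A"
    and f: "f \<in> borel_measurable M"
  shows "c * (\<integral>\<^sup>+ x. f x \<partial>M) \<le> (\<integral>\<^sup>+ x. f x \<partial>N)"
proof -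
  have "c * emeasure M A \<le> emeasure N A" for A
    by (cases "A \<in> sets M") (auto simp: dom emeasure_notin_sets sets_eq)
  then have "scale_measure c M \<le> N"
    unfolding le_measure_iff le_fun_def
    using sets_eq sets_eq_imp_space_eq[OF sets_eq] by (simp add: space_scale_measure)
  then have "(\<integral>\<^sup>+ x. f x \<partial>scale_measure c M) \<le> (\<integral>\<^sup>+ x. f x \<partial>N)"
    by (rule nn_integral_mono_measure[rotated]) (simp add: sets_eq)
  then show ?thesis using nn_integral_scale_measure[OF f] by simp
qed

lemma L_D_ge:
  assumes "prob_space Pp" and sets_eq: "sets Pm = sets Pp"
    and dom: "\<And>A. A \<in> sets Pp \<Longrightarrow> ennreal \<beta> * emeasure Pp A \<le> emeasure Pm A"
    and "0 \<le> \<beta>" "\<beta> \<le> 1" "0 \<le> \<gamma>" "\<gamma> \<le> 1" "0 \<le> a"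
    and D: "D \<in> borel_measurable Pp" and D_nonneg: "\<And>x. x \<in> space Pp \<Longrightarrow> 0 \<le> D x"
  shows "ennreal ((\<gamma> + (1 - \<gamma>) * \<beta>) * a) \<le> L_D a \<gamma> Pm Pp D Pp"
proof -
  interpret prob_space Pp by fact
  define c where "c = \<gamma> + (1 - \<gamma>) * \<beta>"
  define g where "g = (\<lambda>p. ennreal (max 0 (a - D p)))"
  have c: "0 \<le> c" "c \<le> 1"
    using assms(4-7) mult_left_le[of \<beta> "1 - \<gamma>"] unfolding c_def by auto
  have g: "g \<in> borel_measurable Pp" unfolding g_def using D by measurable
  have "ennreal (c * a) = (\<integral>\<^sup>+ p. ennreal (c * a) \<partial>Pp)"
    by (simp add: emeasure_space_1)
  also have "\<dots> \<le> (\<integral>\<^sup>+ p. ennreal c * g p + ennreal (D p) \<partial>Pp)"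
  proof (rule nn_integral_mono)
    fix x assume "x \<in> space Pp"
    then have "0 \<le> D x" by (rule D_nonneg)
    then have "ennreal c * g x + ennreal (D x) = ennreal (c * max 0 (a - D x) + D x)"
      unfolding g_def using c by (simp add: ennreal_mult' ennreal_plus)
    then show "ennreal (c * a) \<le> ennreal c * g x + ennreal (D x)"
      using hinge_plus_ge[OF c \<open>0 \<le> a\<close> \<open>0 \<le> D x\<close>] by (simp add: ennreal_leI)
  qed
  also have "\<dots> = ennreal c * (\<integral>\<^sup>+ p. g p \<partial>Pp) + (\<integral>\<^sup>+ p. ennreal (D p) \<partial>Pp)"
    using g D by (simp add: nn_integral_add nn_integral_cmult)
  also have "ennreal c = ennreal \<gamma> + ennreal (1 - \<gamma>) * ennreal \<beta>"
    unfolding c_def using assms(4-7) by (simp add: ennreal_mult' ennreal_plus)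
  also have "(ennreal \<gamma> + ennreal (1 - \<gamma>) * ennreal \<beta>) * (\<integral>\<^sup>+ p. g p \<partial>Pp)
      = ennreal \<gamma> * (\<integral>\<^sup>+ p. g p \<partial>Pp) + ennreal (1 - \<gamma>) * (ennreal \<beta> * (\<integral>\<^sup>+ p. g p \<partial>Pp))"
    by (simp add: distrib_right mult.assoc)
  also have "ennreal \<beta> * (\<integral>\<^sup>+ p. g p \<partial>Pp) \<le> (\<integral>\<^sup>+ p. g p \<partial>Pm)"
    by (rule nn_integral_scaled_mono_measure[OF sets_eq dom g])
  finally show ?thesis
    unfolding L_D_def g_def c_def by (auto simp: add_mono mult_left_mono)
qed

lemma L_D_indicator_compl:
  assumes "prob_space Pp" and sets_eq: "sets Pm = sets Pp"
    and S: "S \<in> sets Pp" "emeasure Pp S = 1" "emeasure Pm S = ennreal \<beta>"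
    and "0 \<le> \<beta>" "0 \<le> \<gamma>" "\<gamma> \<le> 1" "0 \<le> a"
  shows "L_D a \<gamma> Pm Pp (\<lambda>x. a * indicator (space Pp - S) x) Pp
    = ennreal ((\<gamma> + (1 - \<gamma>) * \<beta>) * a)"
proof -
  interpret prob_space Pp by fact
  have space_eq: "space Pm = space Pp" using sets_eq by (rule sets_eq_imp_space_eq)
  have compl: "emeasure Pp (space Pp - S) = 0"
    using S(1,2) emeasure_compl[OF S(1)] by (simp add: emeasure_space_1)
  have hinge: "ennreal (max 0 (a - a * indicator (space Pp - S) x)) = ennreal a * indicator S x"
    if "x \<in> space Pp" for x
    using that \<open>0 \<le> a\<close> by (auto simp: indicator_def)
  have "(\<integral>\<^sup>+ p. ennreal (max 0 (a - a * indicator (space Pp - S) p)) \<partial>Pp) = ennreal a"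
    using S(2) nn_integral_cmult_indicator[OF S(1)] nn_integral_cong[of Pp, OF hinge] by simp
  moreover have "(\<integral>\<^sup>+ p. ennreal (max 0 (a - a * indicator (space Pp - S) p)) \<partial>Pm) = ennreal a * ennreal \<beta>"
  proof -
    have "(\<integral>\<^sup>+ p. ennreal (max 0 (a - a * indicator (space Pp - S) p)) \<partial>Pm)
        = (\<integral>\<^sup>+ p. ennreal a * indicator S p \<partial>Pm)"
      by (intro nn_integral_cong hinge) (simp add: space_eq)
    then show ?thesis using S(1,3) sets_eq nn_integral_cmult_indicator[of S Pm a] by simp
  qed
  moreover have "(\<integral>\<^sup>+ p. ennreal (a * indicator (space Pp - S) p) \<partial>Pp) = 0"
    using compl \<open>0 \<le> a\<close> nn_integral_cmult_indicator[of "space Pp - S" Pp a] S(1)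
    by (simp add: ennreal_mult' ennreal_indicator)
  moreover have "ennreal \<gamma> * ennreal a + ennreal (1 - \<gamma>) * (ennreal a * ennreal \<beta>)
      = ennreal ((\<gamma> + (1 - \<gamma>) * \<beta>) * a)"
  proof -
    have "ennreal \<gamma> * ennreal a + ennreal (1 - \<gamma>) * (ennreal a * ennreal \<beta>)
        = ennreal (\<gamma> * a + (1 - \<gamma>) * (a * \<beta>))"
      using assms(6-9) by (simp add: ennreal_mult ennreal_plus)
    then show ?thesis by (simp add: algebra_simps)
  qed
  ultimately show ?thesis unfolding L_D_def by simp
qed

lemma L_G_le_of_integral_eq_0:
  assumes "(\<integral> p. D p \<partial>Pp) = 0" "0 \<le> \<gamma>" "\<And>x. x \<in> space Q \<Longrightarrow> 0 \<le> D x"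
  shows "L_G \<gamma> Pm Pp D Pp \<le> L_G \<gamma> Pm Pp D Q"
proof -
  have "0 \<le> (\<integral> p. D p \<partial>Q)" using assms(3) by (rule Bochner_Integration.integral_nonneg)
  then show ?thesis unfolding L_G_def using assms(1,2) by simp
qed

theorem theorem2:
  fixes M Pp Pn Pm :: "'a measure" and \<beta> a \<gamma> :: real
  assumes "prob_space Pp" and "prob_space Pn"
    and "sets Pp = sets M" and "sets Pn = sets M"
    and "\<exists>S\<in>sets M. emeasure Pp S = 1 \<and> emeasure Pn S = 0"
    and "0 < \<beta>" and "\<beta> < 1"
    and "sets Pm = sets M"
    and "\<And>A. A \<in> sets M \<Longrightarrow> emeasure Pm A = ennreal \<beta> * emeasure Pp A + ennreal (1 - \<beta>) * emeasure Pn A"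
    and "a > 0" and "0 < \<gamma>" and "\<gamma> \<le> 1"
  shows "\<exists>Dstar \<in> borel_measurable M. (\<forall>x\<in>space M. 0 \<le> Dstar x \<and> Dstar x \<le> a)
     \<and> (\<forall>D \<in> borel_measurable M. (\<forall>x\<in>space M. 0 \<le> D x) \<longrightarrow>
           L_D a \<gamma> Pm Pp Dstar Pp \<le> L_D a \<gamma> Pm Pp D Pp)
     \<and> (\<forall>Q. prob_space Q \<and> sets Q = sets M \<longrightarrow>
           L_G \<gamma> Pm Pp Dstar Pp \<le> L_G \<gamma> Pm Pp Dstar Q)"
proof -
  interpret prob_space Pp by fact
  obtain S where S: "S \<in> sets M" "emeasure Pp S = 1" "emeasure Pn S = 0"
    using assms(5) by blast
  have space_Pp: "space Pp = space M" using assms(3) by (rule sets_eq_imp_space_eq)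
  have sets_eq: "sets Pm = sets Pp" using assms(3,8) by simp
  have dom: "ennreal \<beta> * emeasure Pp A \<le> emeasure Pm A" if "A \<in> sets Pp" for A
    using assms(3,9) that by simp
  define Dstar where "Dstar = (\<lambda>x. a * indicator (space M - S) x :: real)"
  have "Dstar \<in> borel_measurable M" unfolding Dstar_def using S(1) by measurable
  moreover have "\<forall>x\<in>space M. 0 \<le> Dstar x \<and> Dstar x \<le> a"
    using assms(10) by (simp add: Dstar_def indicator_def)
  moreover have "L_D a \<gamma> Pm Pp Dstar Pp \<le> L_D a \<gamma> Pm Pp D Pp"
    if "D \<in> borel_measurable M" "\<forall>x\<in>space M. 0 \<le> D x" for D
    using L_D_indicator_compl[OF assms(1) sets_eq, of S \<beta> \<gamma> a]
      L_D_ge[OF assms(1) sets_eq dom, of \<gamma> a D] S assms(3,6,7,9-12) that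
    by (simp add: Dstar_def space_Pp measurable_cong_sets[OF assms(3) refl])
  moreover have "(\<integral> p. Dstar p \<partial>Pp) = 0"
  proof -
    have "S \<in> sets Pp" using S(1) assms(3) by simp
    then have "emeasure Pp (space M - S) = 0"
      using S(2) emeasure_compl[of S Pp] by (simp add: space_Pp[symmetric] emeasure_space_1)
    then show ?thesis using S(1) assms(3) by (simp add: Dstar_def measure_def)
  qed
  then have "L_G \<gamma> Pm Pp Dstar Pp \<le> L_G \<gamma> Pm Pp Dstar Q" if "sets Q = sets M" for Q
    using assms(10,11) sets_eq_imp_space_eq[OF that]
    by (intro L_G_le_of_integral_eq_0) (simp_all add: Dstar_def)
  ultimately show ?thesis by blast
qed

end
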